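(* For every expansive homeomorphism $f$ of a compact metrizable space $X$ there is a metric $\mathrm{d}$ on $X$ defining its topology such that $f$ is a bi-Lipschitz homeomorphism of $(X,\mathrm{d})$ and $f$ is $\mathrm{d}_W$-robustly expansive, i.e. there are $\epsilon,\delta>0$ such that every bi-Lipschitz homeomorphism $g$ of $(X,\mathrm{d})$ with $\mathrm{d}_W(f,g)<\epsilon$ is expansive with expansive constant $\delta$.
   Context: A homeomorphism $g$ of a compact metric space $(X,\mathrm{d})$ is expansive with expansive constant $\delta>0$ if $\mathrm{d}(g^n(x),g^n(y))\le\delta$ for all $n\in\mathbb Z$ implies $x=y$; $f$ is expansive if it is so for some metric defining the topology and some $\delta$. $\mathrm{d}_{C^0}(f,g)=\max_{x}\mathrm{d}(f(x),g(x))+\max_x\mathrm{d}(f^{-1}(x),g^{-1}(x))$; $\mathrm{d}'_W(f,g)=\sup_{x\ne y}\frac{|\mathrm{d}(f(x),f(y))-\mathrm{d}(g(x),g(y))|}{\mathrm{d}(x,y)}$; $\mathrm{d}_W(f,g)=\mathrm{d}_{C^0}(f,g)+\mathrm{d}'_W(f,g)+\mathrm{d}'_W(f^{-1},g^{-1})$ for bi-Lipschitz homeomorphisms $f,g$. *)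

theory Defs
  imports "HOL-Analysis.Analysis"
begin

definition iter_int :: "'a set \<Rightarrow> ('a \<Rightarrow> 'a) \<Rightarrow> int \<Rightarrow> 'a \<Rightarrow> 'a" where
  "iter_int M g n = (if 0 \<le> n then g ^^ nat n else (inv_into M g) ^^ nat (- n))"

definition expansive_const :: "'a set \<Rightarrow> ('a \<Rightarrow> 'a \<Rightarrow> real) \<Rightarrow> ('a \<Rightarrow> 'a) \<Rightarrow> real \<Rightarrow> bool" where
  "expansive_const M d g \<delta> \<longleftrightarrow> 0 < \<delta> \<and>
     (\<forall>x\<in>M. \<forall>y\<in>M. (\<forall>n::int. d (iter_int M g n x) (iter_int M g n y) \<le> \<delta>) \<longrightarrow> x = y)"

definition expansive_homeo :: "'a topology \<Rightarrow> ('a \<Rightarrow> 'a) \<Rightarrow> bool" where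
  "expansive_homeo X f \<longleftrightarrow> homeomorphic_map X X f \<and>
     (\<exists>d \<delta>. Metric_space (topspace X) d \<and> Metric_space.mtopology (topspace X) d = X \<and>
            expansive_const (topspace X) d f \<delta>)"

definition lipschitz_on_metric :: "'a set \<Rightarrow> ('a \<Rightarrow> 'a \<Rightarrow> real) \<Rightarrow> ('a \<Rightarrow> 'a) \<Rightarrow> bool" where
  "lipschitz_on_metric M d g \<longleftrightarrow> (\<exists>L. \<forall>x\<in>M. \<forall>y\<in>M. d (g x) (g y) \<le> L * d x y)"

definition bilip_homeo :: "'a set \<Rightarrow> ('a \<Rightarrow> 'a \<Rightarrow> real) \<Rightarrow> ('a \<Rightarrow> 'a) \<Rightarrow> bool" where
  "bilip_homeo M d g \<longleftrightarrow> bij_betw g M M \<and> lipschitz_on_metric M d g \<and>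
     lipschitz_on_metric M d (inv_into M g)"

definition dC0 :: "'a set \<Rightarrow> ('a \<Rightarrow> 'a \<Rightarrow> real) \<Rightarrow> ('a \<Rightarrow> 'a) \<Rightarrow> ('a \<Rightarrow> 'a) \<Rightarrow> real" where
  "dC0 M d f g = (SUP x\<in>M. d (f x) (g x)) + (SUP x\<in>M. d (inv_into M f x) (inv_into M g x))"

definition dW' :: "'a set \<Rightarrow> ('a \<Rightarrow> 'a \<Rightarrow> real) \<Rightarrow> ('a \<Rightarrow> 'a) \<Rightarrow> ('a \<Rightarrow> 'a) \<Rightarrow> real" where
  "dW' M d f g = (SUP p\<in>{(x,y). x \<in> M \<and> y \<in> M \<and> x \<noteq> y}.
      \<bar>d (f (fst p)) (f (snd p)) - d (g (fst p)) (g (snd p))\<bar> / d (fst p) (snd p))"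

definition dW :: "'a set \<Rightarrow> ('a \<Rightarrow> 'a \<Rightarrow> real) \<Rightarrow> ('a \<Rightarrow> 'a) \<Rightarrow> ('a \<Rightarrow> 'a) \<Rightarrow> real" where
  "dW M d f g = dC0 M d f g + dW' M d f g + dW' M d (inv_into M f) (inv_into M g)"

end

theory Submission
  imports Defs
begin

(*
  Let f be an expansive homeomorphism of a compact metric space (M, d0) with expansive constant c.
  Compactness makes expansivity uniform: two points whose orbits stay c-close for |k| \<le> M0 steps
  are c/2-close.  Let N(x,y) be the first time |k| at which the orbits of x and y are more than c/2
  apart and put rho(x,y) = s^(2 N(x,y)) for a suitable 0 < s < 1.  Uniformity gives the four-point
  inequality rho(x,w) \<le> 2 max(rho(x,y), rho(y,z), rho(z,w)), and Frink's chain construction turns rho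
  into a metric D with rho/2 \<le> D \<le> rho.  The adapted metric d(x,y) = sup_n s^|n| D(f^n x, f^n y)
  defines the original topology, makes f and f^-1 Lipschitz with constant 1/s, and f expands small
  distances: d(x,y) \<le> s max(d(fx,fy), d(f^-1 x, f^-1 y)).  This local expansion survives any
  perturbation g with d_W(f,g) small (with a factor \<mu> > 1 instead of 1/s), and a bounded integer
  sequence that expands by \<mu> > 1 at every positive term vanishes; hence g is expansive.
*)

section \<open>Integer iterates\<close>

lemma funpow_in: "h ` M \<subseteq> M \<Longrightarrow> x \<in> M \<Longrightarrow> (h ^^ n) x \<in> M"
  by (induct n) auto

lemma inv_into_maps: "bij_betw h M M \<Longrightarrow> x \<in> M \<Longrightarrow> inv_into M h x \<in> M"
  by (metis bij_betw_def inv_into_into)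

lemma iter_int_in:
  assumes "bij_betw h M M" "x \<in> M" shows "iter_int M h n x \<in> M"
  using assms funpow_in[of h M] funpow_in[of "inv_into M h" M] inv_into_maps[OF assms(1)]
  unfolding iter_int_def by (auto simp: bij_betw_def image_subset_iff)

lemma iter_int_0 [simp]: "iter_int M h 0 = id"
  and iter_int_1: "iter_int M h 1 = h"
  and iter_int_minus_1: "iter_int M h (-1) = inv_into M h"
  by (simp_all add: iter_int_def)

lemma iter_int_succ:
  assumes b: "bij_betw h M M" and x: "x \<in> M"
  shows "iter_int M h (n+1) x = h (iter_int M h n x)"
proof (cases "0 \<le> n")
  case True then have "nat (n+1) = Suc (nat n)" by simp
  then show ?thesis using True by (simp add: iter_int_def)
next
  case False
  define y where "y = (inv_into M h ^^ nat (-(n+1))) x"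
  have y: "y \<in> M" using funpow_in[of "inv_into M h" M] inv_into_maps[OF b] x by (auto simp: y_def)
  have "nat (-n) = Suc (nat (-(n+1)))" using False by simp
  then have "iter_int M h (n+1) x = y" "iter_int M h n x = inv_into M h y"
    using False by (auto simp: iter_int_def y_def)
  then show ?thesis using y b by (simp add: bij_betw_def f_inv_into_f)
qed

lemma iter_int_pred:
  assumes b: "bij_betw h M M" and x: "x \<in> M"
  shows "iter_int M h (n-1) x = inv_into M h (iter_int M h n x)"
  using iter_int_succ[OF b x, of "n-1"] iter_int_in[OF b x, of "n-1"] b
  by (simp add: bij_betw_def inv_into_f_f)

lemma iter_int_add:
  assumes b: "bij_betw h M M" and x: "x \<in> M"
  shows "iter_int M h m (iter_int M h n x) = iter_int M h (m+n) x"
proof (induct m rule: int_induct[where k=0])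
  case (step1 i)
  then show ?case
    using iter_int_succ[OF b iter_int_in[OF b x], of i] iter_int_succ[OF b x, of "i+n"]
    by (simp add: add_ac)
next
  case (step2 i)
  then show ?case
    using iter_int_pred[OF b iter_int_in[OF b x], of i] iter_int_pred[OF b x, of "i+n"]
    by (simp add: algebra_simps)
qed simp

lemma iter_int_continuous:
  assumes "continuous_map X X h" "continuous_map X X (inv_into M h)"
  shows "continuous_map X X (iter_int M h n)"
proof -
  have "continuous_map X X (k ^^ m)" if "continuous_map X X k" for k and m :: nat
    using that by (induct m) (auto intro: continuous_map_compose)
  then show ?thesis using assms unfolding iter_int_def by auto
qed

section \<open>Frink's chain metric\<close>

lemma sum_lessThan_add: "(\<Sum>i<m+(l::nat). g i) = (\<Sum>i<m. g i) + (\<Sum>i<l. g (m+i)::real)"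
  by (induction l) (auto simp: add.assoc)

text \<open>A symmetric, positive function rho satisfying the four-point inequality
  rho(x,w) \<le> 2 max(rho(x,y), rho(y,z), rho(z,w)) is comparable to the length metric D obtained by
  minimizing the rho-cost of finite chains (Frink's metrization lemma): rho/2 \<le> D \<le> rho.\<close>
locale four_point_quasimetric =
  fixes M :: "'a set" and rho :: "'a \<Rightarrow> 'a \<Rightarrow> real"
  assumes nonneg: "\<And>x y. rho x y \<ge> 0" and sym: "\<And>x y. rho x y = rho y x"
    and refl: "\<And>x. rho x x = 0" and pos: "\<And>x y. x \<noteq> y \<Longrightarrow> rho x y > 0"
    and four_point: "\<And>x y z w. x\<in>M \<Longrightarrow> y\<in>M \<Longrightarrow> z\<in>M \<Longrightarrow> w\<in>M \<Longrightarrow>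
      rho x w \<le> 2 * max (rho x y) (max (rho y z) (rho z w))"
begin

definition cost :: "(nat \<Rightarrow> 'a) \<Rightarrow> nat \<Rightarrow> real" where
  "cost p n = (\<Sum>i<n. rho (p i) (p (Suc i)))"

definition chain :: "'a \<Rightarrow> 'a \<Rightarrow> (nat \<Rightarrow> 'a) \<Rightarrow> nat \<Rightarrow> bool" where
  "chain x y p n \<longleftrightarrow> p 0 = x \<and> p n = y \<and> (\<forall>i\<le>n. p i \<in> M)"

definition D :: "'a \<Rightarrow> 'a \<Rightarrow> real" where
  "D x y = Inf {cost p n | p n. chain x y p n}"

lemma cost_nonneg: "cost p n \<ge> 0"
  unfolding cost_def by (simp add: nonneg sum_nonneg)

lemma cost_split: "k \<le> n \<Longrightarrow> cost p n = cost p k + cost (\<lambda>i. p (k + i)) (n - k)"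
  using sum_lessThan_add[where m=k and l="n - k" and g="\<lambda>i. rho (p i) (p (Suc i))"]
  by (simp add: cost_def)

text \<open>Cut the chain
  at the last point k where the cost so far is at most half the total; the pieces before k, the
  step from k to k+1 and the piece after k+1 each cost at most the total, and induction plus the
  four-point inequality conclude.\<close>
lemma endpoints_le_cost: "(\<forall>i\<le>n. p i \<in> M) \<Longrightarrow> rho (p 0) (p n) \<le> 2 * cost p n"
proof (induction n arbitrary: p rule: less_induct)
  case (less n p)
  show ?case
  proof (cases "n = 0")
    case True then show ?thesis by (simp add: refl cost_def)
  next
    case False
    define a where "a = cost p n"
    have a0: "a \<ge> 0" using cost_nonneg by (simp add: a_def)
    define K where "K = {k. k < n \<and> cost p k \<le> a/2}"
    have "0 \<in> K" "finite K" using False a0 by (simp_all add: K_def cost_def)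
    define k where "k = Max K"
    have "k \<in> K" using Max_in[OF \<open>finite K\<close>] \<open>0 \<in> K\<close> by (auto simp: k_def)
    then have k: "k < n" "cost p k \<le> a/2" by (auto simp: K_def)
    have k_last: "cost p (Suc k) \<ge> a/2"
    proof (cases "Suc k = n")
      case True then show ?thesis using a0 by (simp add: a_def)
    next
      case False
      have "Suc k \<notin> K" using Max_ge[OF \<open>finite K\<close>] k_def by fastforce
      then show ?thesis using False k by (auto simp: K_def)
    qed
    define q where "q = (\<lambda>i. p (Suc k + i))"
    have total: "a = cost p (Suc k) + cost q (n - Suc k)"
      using cost_split[of "Suc k" n p] k by (simp add: a_def q_def)
    have step: "cost p (Suc k) = cost p k + rho (p k) (p (Suc k))" by (simp add: cost_def)
    have "rho (p 0) (p k) \<le> 2 * cost p k" using less k by auto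
    then have "rho (p 0) (p k) \<le> a" using k by linarith
    moreover have "rho (q 0) (q (n - Suc k)) \<le> 2 * cost q (n - Suc k)"
      using less.IH[of "n - Suc k" q] less.prems k by (auto simp: q_def)
    then have "rho (p (Suc k)) (p n) \<le> a" using total k_last k by (simp add: q_def)
    moreover have "rho (p k) (p (Suc k)) \<le> a"
      using total step cost_nonneg[of q] cost_nonneg[of p k] by simp
    moreover have "rho (p 0) (p n) \<le>
        2 * max (rho (p 0) (p k)) (max (rho (p k) (p (Suc k))) (rho (p (Suc k)) (p n)))"
      using four_point less.prems k by simp
    ultimately show ?thesis by (simp add: a_def)
  qed
qed

lemma chain_two_points:
  assumes "x \<in> M" "y \<in> M"
  shows "chain x y (\<lambda>i. if i = 0 then x else y) 1" "cost (\<lambda>i. if i = 0 then x else y) 1 = rho x y"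
  using assms by (auto simp: chain_def cost_def)

lemma D_le_cost: "chain x y p n \<Longrightarrow> D x y \<le> cost p n"
  unfolding D_def by (rule cInf_lower) (auto intro: bdd_belowI[of _ 0] simp: cost_nonneg)

lemma D_greatest: "x \<in> M \<Longrightarrow> y \<in> M \<Longrightarrow> (\<And>p n. chain x y p n \<Longrightarrow> t \<le> cost p n) \<Longrightarrow> t \<le> D x y"
  unfolding D_def by (rule cInf_greatest) (use chain_two_points in blast)+

lemma D_le_rho: "x \<in> M \<Longrightarrow> y \<in> M \<Longrightarrow> D x y \<le> rho x y"
  using D_le_cost chain_two_points by metis

lemma rho_le_D: "x \<in> M \<Longrightarrow> y \<in> M \<Longrightarrow> rho x y / 2 \<le> D x y"
proof (rule D_greatest)
  fix p n assume "chain x y p n"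
  then show "rho x y / 2 \<le> cost p n" using endpoints_le_cost[of n p] by (auto simp: chain_def)
qed

lemma D_nonneg: "x \<in> M \<Longrightarrow> y \<in> M \<Longrightarrow> 0 \<le> D x y"
  by (rule D_greatest) (auto simp: cost_nonneg)

lemma D_refl: "x \<in> M \<Longrightarrow> D x x = 0"
  using D_le_rho D_nonneg refl by (metis order_antisym)

text \<open>Reversing a chain does not change its cost.\<close>
lemma D_sym: assumes "x \<in> M" "y \<in> M" shows "D x y = D y x"
proof -
  have "D y x \<le> D x y" if "x \<in> M" "y \<in> M" for x y
  proof (rule D_greatest[OF that])
    fix p n assume ch: "chain x y p n"
    have "cost (\<lambda>i. p (n - i)) n = (\<Sum>i<n. rho (p (n - Suc i)) (p (Suc (n - Suc i))))"
      unfolding cost_def by (intro sum.cong) (auto simp: Suc_diff_Suc sym)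
    also have "\<dots> = cost p n" unfolding cost_def by (rule sum.nat_diff_reindex)
    finally show "D y x \<le> cost p n"
      using D_le_cost[of y x "\<lambda>i. p (n - i)" n] ch by (auto simp: chain_def)
  qed
  then show ?thesis using assms by (meson order_antisym)
qed

text \<open>Concatenating chains adds costs.\<close>
lemma D_triangle: assumes xyz: "x \<in> M" "y \<in> M" "z \<in> M" shows "D x z \<le> D x y + D y z"
proof -
  have concat: "D x z \<le> cost p n + cost q m" if p: "chain x y p n" and q: "chain y z q m" for p n q m
  proof -
    define r where "r i = (if i \<le> n then p i else q (i - n))" for i
    have "cost r (n + m) = cost r n + cost (\<lambda>i. r (n + i)) m" using cost_split[of n "n+m" r] by simp
    also have "\<dots> = cost p n + cost q m"
      using p q unfolding cost_def chain_def r_def by (intro arg_cong2[where f="(+)"] sum.cong) auto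
    finally show ?thesis using D_le_cost[of x z r "n+m"] p q by (auto simp: chain_def r_def)
  qed
  have "D x z - D y z \<le> D x y"
  proof (rule D_greatest[OF xyz(1,2)])
    fix p n assume p: "chain x y p n"
    have "D x z - cost p n \<le> D y z"
      by (rule D_greatest[OF xyz(2,3)]) (use concat p in force)
    then show "D x z - D y z \<le> cost p n" by simp
  qed
  then show ?thesis by simp
qed

end

section \<open>Robustness of local expansion under \<open>d\<^sub>W\<close>-perturbations\<close>

definition locally_expanding ::
    "'a set \<Rightarrow> ('a \<Rightarrow> 'a \<Rightarrow> real) \<Rightarrow> ('a \<Rightarrow> 'a) \<Rightarrow> real \<Rightarrow> real \<Rightarrow> bool" where
  "locally_expanding M d g \<mu> \<delta> \<longleftrightarrow> (\<forall>x\<in>M. \<forall>y\<in>M. x \<noteq> y \<and> d x y \<le> \<delta> \<longrightarrow>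
      \<mu> * d x y \<le> max (d (g x) (g y)) (d (inv_into M g x) (inv_into M g y)))"

text \<open>For Lipschitz maps the supremum defining d'_W is over a bounded set, so it dominates each
  difference quotient.\<close>
lemma dW'_upper:
  assumes ms: "Metric_space M d"
    and lf: "lipschitz_on_metric M d f" and lg: "lipschitz_on_metric M d g"
    and u: "u \<in> M" and v: "v \<in> M" and uv: "u \<noteq> v"
  shows "\<bar>d (f u) (f v) - d (g u) (g v)\<bar> / d u v \<le> dW' M d f g"
proof -
  interpret Metric_space M d by (rule ms)
  obtain Lf where Lf: "\<forall>x\<in>M. \<forall>y\<in>M. d (f x) (f y) \<le> Lf * d x y"
    using lf by (auto simp: lipschitz_on_metric_def)
  obtain Lg where Lg: "\<forall>x\<in>M. \<forall>y\<in>M. d (g x) (g y) \<le> Lg * d x y"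
    using lg by (auto simp: lipschitz_on_metric_def)
  define P where "P = {(x,y). x \<in> M \<and> y \<in> M \<and> x \<noteq> y}"
  define \<phi> where "\<phi> p = \<bar>d (f (fst p)) (f (snd p)) - d (g (fst p)) (g (snd p))\<bar> / d (fst p) (snd p)"
    for p
  have "bdd_above (\<phi> ` P)"
  proof (rule bdd_aboveI[of _ "Lf + Lg"])
    fix t assume "t \<in> \<phi> ` P"
    then obtain x y where xy: "x \<in> M" "y \<in> M" "x \<noteq> y" "t = \<phi> (x,y)" by (auto simp: P_def)
    have "\<bar>d (f x) (f y) - d (g x) (g y)\<bar> \<le> d (f x) (f y) + d (g x) (g y)"
      using nonneg[of "f x" "f y"] nonneg[of "g x" "g y"] by (simp add: abs_le_iff)
    also have "\<dots> \<le> (Lf + Lg) * d x y" using Lf Lg xy by (simp add: distrib_right add_mono)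
    finally show "t \<le> Lf + Lg" using xy by (simp add: \<phi>_def pos_divide_le_eq less_le)
  qed
  moreover have "(u,v) \<in> P" using u v uv by (simp add: P_def)
  ultimately have "\<phi> (u,v) \<le> (SUP p\<in>P. \<phi> p)" by (intro cSUP_upper)
  then show ?thesis unfolding dW'_def P_def \<phi>_def by simp
qed

text \<open>On a bounded metric space the C0 part of d_W is nonnegative, so each d'_W summand of d_W
  is at most d_W.\<close>
lemma dW'_le_dW:
  assumes ms: "Metric_space M d" and bounded: "\<forall>x\<in>M. \<forall>y\<in>M. d x y \<le> B"
    and bf: "bilip_homeo M d f" and bg: "bilip_homeo M d g"
    and u: "u \<in> M" and v: "v \<in> M" and uv: "u \<noteq> v"
  shows "dW' M d f g \<le> dW M d f g" "dW' M d (inv_into M f) (inv_into M g) \<le> dW M d f g"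
proof -
  interpret Metric_space M d by (rule ms)
  have into: "h x \<in> M" "inv_into M h x \<in> M" if "bilip_homeo M d h" "x \<in> M" for h x
    using that by (auto simp: bilip_homeo_def bij_betw_def inv_into_into)
  have sup_nonneg: "0 \<le> (SUP x\<in>M. d (h x) (k x))" if "\<And>x. x \<in> M \<Longrightarrow> h x \<in> M \<and> k x \<in> M" for h k
  proof -
    have "bdd_above ((\<lambda>x. d (h x) (k x)) ` M)" using that bounded by (intro bdd_aboveI) auto
    then have "d (h u) (k u) \<le> (SUP x\<in>M. d (h x) (k x))" using u by (intro cSUP_upper)
    then show ?thesis using nonneg order_trans by blast
  qed
  have "0 \<le> dC0 M d f g" unfolding dC0_def
    by (intro add_nonneg_nonneg sup_nonneg) (use into bf bg in auto)
  moreover have "0 \<le> dW' M d h h'"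
    if "lipschitz_on_metric M d h" "lipschitz_on_metric M d h'" for h h'
  proof -
    have "0 \<le> \<bar>d (h u) (h v) - d (h' u) (h' v)\<bar> / d u v" using nonneg[of u v] by simp
    then show ?thesis using dW'_upper[OF ms that u v uv] by linarith
  qed
  then have "0 \<le> dW' M d f g" "0 \<le> dW' M d (inv_into M f) (inv_into M g)"
    using bf bg by (auto simp: bilip_homeo_def)
  ultimately show "dW' M d f g \<le> dW M d f g" "dW' M d (inv_into M f) (inv_into M g) \<le> dW M d f g"
    unfolding dW_def by linarith+
qed

lemma expansion_persists:
  assumes ms: "Metric_space M d" and bf: "bilip_homeo M d f" and bg: "bilip_homeo M d g"
    and f_exp: "locally_expanding M d f \<beta> \<delta>"
    and close: "dW' M d f g < \<epsilon>" and close_inv: "dW' M d (inv_into M f) (inv_into M g) < \<epsilon>"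
  shows "locally_expanding M d g (\<beta> - \<epsilon>) \<delta>"
  unfolding locally_expanding_def
proof (intro ballI impI)
  interpret Metric_space M d by (rule ms)
  fix u v assume u: "u \<in> M" and v: "v \<in> M" and uv: "u \<noteq> v \<and> d u v \<le> \<delta>"
  have dpos: "d u v > 0" using u v uv by (simp add: less_le)
  have quotient: "d (h' u) (h' v) \<ge> d (h u) (h v) - \<epsilon> * d u v"
    if "lipschitz_on_metric M d h" "lipschitz_on_metric M d h'" "dW' M d h h' < \<epsilon>" for h h'
  proof -
    have "\<bar>d (h u) (h v) - d (h' u) (h' v)\<bar> / d u v < \<epsilon>"
      using dW'_upper[OF ms that(1,2) u v] uv that(3) by linarith
    then show ?thesis using dpos by (simp add: divide_less_eq abs_less_iff)
  qed
  have "\<beta> * d u v \<le> max (d (f u) (f v)) (d (inv_into M f u) (inv_into M f v))"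
    using f_exp u v uv by (auto simp: locally_expanding_def)
  then show "(\<beta> - \<epsilon>) * d u v \<le> max (d (g u) (g v)) (d (inv_into M g u) (inv_into M g v))"
    using quotient[of f g] quotient[of "inv_into M f" "inv_into M g"] bf bg close close_inv
    by (auto simp: bilip_homeo_def left_diff_distrib max_def split: if_splits)
qed

text \<open>A bounded nonnegative integer-indexed sequence which at every positive term grows by a
  factor \<mu> > 1 in one of the two directions vanishes: a term close to the supremum would have a
  neighbour beyond it.\<close>
lemma expanding_bounded_sequence_vanishes:
  fixes a :: "int \<Rightarrow> real"
  assumes bdd: "bdd_above (range a)" and nonneg: "\<And>n. 0 \<le> a n" and \<mu>: "\<mu> > 1"
    and expands: "\<And>n. a n > 0 \<Longrightarrow> \<mu> * a n \<le> max (a (n+1)) (a (n-1))"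
  shows "a m = 0"
proof (rule ccontr)
  assume "a m \<noteq> 0"
  define S where "S = (SUP n. a n)"
  have aS: "a n \<le> S" for n unfolding S_def using bdd by (simp add: cSUP_upper)
  have "S > 0" using aS[of m] nonneg[of m] \<open>a m \<noteq> 0\<close> by linarith
  then have "S / \<mu> < S" using \<mu> by (simp add: divide_less_eq)
  then obtain n where n: "S / \<mu> < a n" unfolding S_def using less_cSUP_iff[OF _ bdd] by auto
  then have "S < \<mu> * a n" using \<mu> by (simp add: divide_less_eq mult.commute)
  moreover have "a n > 0" using n \<open>S > 0\<close> \<mu> by (smt (verit) divide_pos_pos)
  then have "\<mu> * a n \<le> S" using expands[of n] aS[of "n+1"] aS[of "n-1"] by linarith
  ultimately show False by simp
qed

text \<open>A locally expanding bijection is expansive: the distances along the orbits of two points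
  that stay \<delta>-close form a sequence as above.\<close>
lemma locally_expanding_imp_expansive:
  assumes ms: "Metric_space M d" and bij: "bij_betw g M M"
    and g_exp: "locally_expanding M d g \<mu> \<delta>" and \<mu>: "\<mu> > 1" and \<delta>: "\<delta> > 0"
  shows "expansive_const M d g \<delta>"
  unfolding expansive_const_def
proof (intro conjI \<delta> ballI impI)
  interpret Metric_space M d by (rule ms)
  fix x y assume x: "x \<in> M" and y: "y \<in> M"
    and orbit: "\<forall>n::int. d (iter_int M g n x) (iter_int M g n y) \<le> \<delta>"
  define a where "a n = d (iter_int M g n x) (iter_int M g n y)" for n
  have "a 0 = 0"
  proof (rule expanding_bounded_sequence_vanishes[OF _ _ \<mu>])
    show "bdd_above (range a)" using orbit by (intro bdd_aboveI[of _ \<delta>]) (auto simp: a_def)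
    show "0 \<le> a n" for n by (simp add: a_def)
  next
    fix n assume "a n > 0"
    moreover have "iter_int M g n x \<in> M" "iter_int M g n y \<in> M"
      using iter_int_in[OF bij] x y by auto
    ultimately show "\<mu> * a n \<le> max (a (n+1)) (a (n-1))"
      using g_exp orbit iter_int_succ[OF bij] iter_int_pred[OF bij] x y
      by (auto simp: a_def locally_expanding_def)
  qed
  then show "x = y" using x y by (simp add: a_def)
qed

theorem robustly_expansive:
  assumes ms: "Metric_space M d" and bounded: "\<forall>x\<in>M. \<forall>y\<in>M. d x y \<le> B"
    and bf: "bilip_homeo M d f" and f_exp: "locally_expanding M d f \<beta> \<delta>"
    and \<beta>: "\<beta> > 1" and \<delta>: "\<delta> > 0"
    and bg: "bilip_homeo M d g" and close: "dW M d f g < (\<beta> - 1) / 2"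
  shows "expansive_const M d g \<delta>"
proof (cases "\<exists>u\<in>M. \<exists>v\<in>M. u \<noteq> v")
  case True
  then obtain u v where uv: "u \<in> M" "v \<in> M" "u \<noteq> v" by blast
  have "locally_expanding M d g (\<beta> - (\<beta> - 1) / 2) \<delta>"
    using expansion_persists[OF ms bf bg f_exp] dW'_le_dW[OF ms bounded bf bg uv] close by simp
  moreover have "\<beta> - (\<beta> - 1) / 2 > 1" using \<beta> by (simp add: field_simps)
  ultimately show ?thesis
    using locally_expanding_imp_expansive[OF ms] bg \<delta> by (auto simp: bilip_homeo_def)
next
  case False
  then show ?thesis using \<delta> by (auto simp: expansive_const_def)
qed

section \<open>Uniform expansivity\<close>

lemma (in Metric_space) limitin_dist_tendsto:
  assumes a: "limitin mtopology a l F" and b: "limitin mtopology b l' F"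
  shows "((\<lambda>j. d (a j) (b j)) \<longlongrightarrow> d l l') F"
proof -
  have l: "l \<in> M" "l' \<in> M" using a b limitin_mspace by blast+
  have "((\<lambda>j. d (a j) l + d (b j) l') \<longlongrightarrow> 0) F"
    using a b by (intro tendsto_add_zero) (auto simp: limitin_metric_dist_null)
  moreover have "eventually (\<lambda>j. norm (d (a j) (b j) - d l l') \<le> d (a j) l + d (b j) l') F"
  proof -
    have "eventually (\<lambda>j. a j \<in> M \<and> b j \<in> M) F"
      using a b by (auto simp: limitin_metric_dist_null eventually_conj_iff)
    then show ?thesis
    proof (rule eventually_mono)
      fix j assume "a j \<in> M \<and> b j \<in> M"
      then show "norm (d (a j) (b j) - d l l') \<le> d (a j) l + d (b j) l'"
        using l triangle[of "a j" l "b j"] triangle[of l l' "b j"] triangle[of l "a j" l']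
          triangle[of "a j" "b j" l'] commute[of "a j" l] commute[of "b j" l']
        by (auto simp: abs_le_iff)
    qed
  qed
  ultimately have "((\<lambda>j. d (a j) (b j) - d l l') \<longlongrightarrow> 0) F"
    by (rule Lim_null_comparison[rotated])
  then show ?thesis by (simp add: LIM_zero_iff)
qed

locale expansive_system = Metric_space M d0 for M d0 +
  fixes f :: "'a \<Rightarrow> 'a" and c :: real
  assumes bij: "bij_betw f M M"
    and cont: "continuous_map mtopology mtopology f"
    and cont_inv: "continuous_map mtopology mtopology (inv_into M f)"
    and compact: "compact_space mtopology"
    and expansive: "expansive_const M d0 f c"
begin

abbreviation F :: "int \<Rightarrow> 'a \<Rightarrow> 'a" where "F \<equiv> iter_int M f"

lemma c_pos: "c > 0" using expansive by (simp add: expansive_const_def)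

lemma F_in: "x \<in> M \<Longrightarrow> F n x \<in> M"
  using iter_int_in[OF bij] .

lemma F_add: "x \<in> M \<Longrightarrow> F m (F n x) = F (m+n) x"
  using iter_int_add[OF bij] .

lemma F_continuous: "continuous_map mtopology mtopology (F n)"
  using iter_int_continuous[OF cont cont_inv] .

text \<open>Otherwise a limit pair of counterexamples would be two
  distinct points whose whole orbits stay c-close.\<close>
lemma uniform_expansivity:
  assumes e: "e > 0"
  shows "\<exists>m::nat. \<forall>x\<in>M. \<forall>y\<in>M.
           (\<forall>k::int. \<bar>k\<bar> \<le> int m \<longrightarrow> d0 (F k x) (F k y) \<le> c) \<longrightarrow> d0 x y \<le> e"
proof (rule ccontr)
  assume "\<not> ?thesis"
  then obtain X Y where XY: "\<And>m. X m \<in> M" "\<And>m. Y m \<in> M"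
    and close: "\<And>m k. \<bar>k\<bar> \<le> int m \<Longrightarrow> d0 (F k (X m)) (F k (Y m)) \<le> c"
    and far: "\<And>m. d0 (X m) (Y m) > e"
    by (simp add: not_le) metis
  have seq_compact: "\<exists>l r. l \<in> M \<and> strict_mono r \<and> limitin mtopology (\<sigma> \<circ> r) l sequentially"
    if "range \<sigma> \<subseteq> M" for \<sigma> :: "nat \<Rightarrow> 'a"
    using compact that compact_space_sequentially by blast
  obtain l r where l: "l \<in> M" "strict_mono r" "limitin mtopology (X \<circ> r) l sequentially"
    using seq_compact[of X] XY by blast
  obtain l' r' where l': "l' \<in> M" "strict_mono r'" "limitin mtopology (Y \<circ> r \<circ> r') l' sequentially"
    using seq_compact[of "Y \<circ> r"] XY by auto
  define q where "q = r \<circ> r'"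
  have q: "strict_mono q" using l(2) l'(2) by (simp add: q_def strict_mono_o)
  have LX: "limitin mtopology (X \<circ> q) l sequentially"
    using limitin_subsequence[OF l'(2) l(3)] by (simp add: q_def o_assoc)
  have LY: "limitin mtopology (Y \<circ> q) l' sequentially"
    using l'(3) by (simp add: q_def o_assoc)
  have "d0 (F k l) (F k l') \<le> c" for k
  proof (rule tendsto_upperbound)
    show "((\<lambda>j. d0 ((F k \<circ> (X \<circ> q)) j) ((F k \<circ> (Y \<circ> q)) j)) \<longlongrightarrow> d0 (F k l) (F k l')) sequentially"
      by (intro limitin_dist_tendsto continuous_map_limit[OF F_continuous] LX LY)
    have "eventually (\<lambda>j. nat \<bar>k\<bar> \<le> j) sequentially" by (rule eventually_ge_at_top)
    then show "eventually (\<lambda>j. d0 ((F k \<circ> (X \<circ> q)) j) ((F k \<circ> (Y \<circ> q)) j) \<le> c) sequentially"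
    proof (rule eventually_mono)
      fix j assume "nat \<bar>k\<bar> \<le> j"
      then have "\<bar>k\<bar> \<le> int (q j)" using seq_suble[OF q, of j] by linarith
      then show "d0 ((F k \<circ> (X \<circ> q)) j) ((F k \<circ> (Y \<circ> q)) j) \<le> c" using close by simp
    qed
  qed simp
  then have "l = l'" using expansive l l' by (auto simp: expansive_const_def)
  have "e \<le> d0 l l'"
    by (rule tendsto_lowerbound[OF limitin_dist_tendsto[OF LX LY]])
      (use far less_imp_le in \<open>auto intro: always_eventually\<close>)
  then show False using \<open>l = l'\<close> l' e by simp
qed

end

section \<open>The adapted metric\<close>

locale adapted_setup = expansive_system +
  fixes M0 :: nat and s :: real
  assumes uniform: "\<forall>x\<in>M. \<forall>y\<in>M.
      (\<forall>k::int. \<bar>k\<bar> \<le> int M0 \<longrightarrow> d0 (F k x) (F k y) \<le> c) \<longrightarrow> d0 x y \<le> c/2"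
    and s_pos: "0 < s" and s_less_1: "s < 1" and s_power: "s^(4*M0) \<ge> 1/2"
begin

definition orbit_close :: "nat \<Rightarrow> 'a \<Rightarrow> 'a \<Rightarrow> bool" where
  "orbit_close m x y \<longleftrightarrow> (\<forall>k::int. \<bar>k\<bar> < int m \<longrightarrow> d0 (F k x) (F k y) \<le> c/2)"

definition sep_time :: "'a \<Rightarrow> 'a \<Rightarrow> nat" where
  "sep_time x y = (LEAST n. \<exists>k::int. \<bar>k\<bar> \<le> int n \<and> d0 (F k x) (F k y) > c/2)"

definition rho :: "'a \<Rightarrow> 'a \<Rightarrow> real" where
  "rho x y = (if x = y then 0 else s^(2 * sep_time x y))"

lemma sep_time_attained:
  assumes "x \<in> M" "y \<in> M" "x \<noteq> y"
  shows "\<exists>k. \<bar>k\<bar> = int (sep_time x y) \<and> d0 (F k x) (F k y) > c/2"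
proof -
  obtain k where "d0 (F k x) (F k y) > c"
    using expansive assms unfolding expansive_const_def by (meson not_le)
  then have "\<exists>n. \<exists>k::int. \<bar>k\<bar> \<le> int n \<and> d0 (F k x) (F k y) > c/2"
    using c_pos by (intro exI[of _ "nat \<bar>k\<bar>"] exI[of _ k]) auto
  from LeastI_ex[OF this] obtain k where k: "\<bar>k\<bar> \<le> int (sep_time x y)" "d0 (F k x) (F k y) > c/2"
    unfolding sep_time_def by blast
  have "sep_time x y \<le> nat \<bar>k\<bar>" unfolding sep_time_def by (rule Least_le) (use k in auto)
  then show ?thesis using k by (intro exI[of _ k]) auto
qed

lemma orbit_close_sep_time: "orbit_close (sep_time x y) x y"
  unfolding orbit_close_def
proof (intro allI impI)
  fix k :: int assume k: "\<bar>k\<bar> < int (sep_time x y)"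
  show "d0 (F k x) (F k y) \<le> c/2"
  proof (rule ccontr)
    assume "\<not> ?thesis"
    then have "sep_time x y \<le> nat \<bar>k\<bar>" unfolding sep_time_def
      by (intro Least_le) (auto intro!: exI[of _ k])
    then show False using k by linarith
  qed
qed

lemma sep_time_ge:
  assumes "x \<in> M" "y \<in> M" "x \<noteq> y" "orbit_close m x y" shows "m \<le> sep_time x y"
proof (rule ccontr)
  assume early: "\<not> m \<le> sep_time x y"
  obtain k where k: "\<bar>k\<bar> = int (sep_time x y)" "d0 (F k x) (F k y) > c/2"
    using sep_time_attained assms by blast
  then have "\<bar>k\<bar> < int m" using early by linarith
  then show False using k assms(4) unfolding orbit_close_def by (meson not_le)
qed

lemma orbit_close_mono: "orbit_close m x y \<Longrightarrow> n \<le> m \<Longrightarrow> orbit_close n x y"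
  unfolding orbit_close_def by force

text \<open>Closeness is transitive at the cost of M0 time steps, by uniform expansivity.\<close>
lemma orbit_close_trans:
  assumes xyz: "x \<in> M" "y \<in> M" "z \<in> M" and "orbit_close m x y" "orbit_close m y z"
  shows "orbit_close (m - M0) x z"
  unfolding orbit_close_def
proof (intro allI impI)
  fix j :: int assume j: "\<bar>j\<bar> < int (m - M0)"
  have "d0 (F k (F j x)) (F k (F j z)) \<le> c" if k: "\<bar>k\<bar> \<le> int M0" for k
  proof -
    have "\<bar>k + j\<bar> < int m" using j k by linarith
    then have "d0 (F (k+j) x) (F (k+j) y) + d0 (F (k+j) y) (F (k+j) z) \<le> c/2 + c/2"
      using assms(4,5) unfolding orbit_close_def by (meson add_mono)
    then show ?thesis using triangle[of "F (k+j) x" "F (k+j) y" "F (k+j) z"] F_in F_add xyz by simp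
  qed
  then show "d0 (F j x) (F j z) \<le> c/2" using uniform F_in xyz by blast
qed

lemma orbit_close_shift:
  assumes "x \<in> M" "y \<in> M" "orbit_close m x y"
  shows "orbit_close (m - nat \<bar>j\<bar>) (F j x) (F j y)"
  unfolding orbit_close_def
proof (intro allI impI)
  fix k :: int assume "\<bar>k\<bar> < int (m - nat \<bar>j\<bar>)"
  then have "\<bar>k + j\<bar> < int m" by linarith
  then show "d0 (F k (F j x)) (F k (F j y)) \<le> c/2"
    using assms F_add unfolding orbit_close_def by simp
qed

lemma rho_nonneg: "rho x y \<ge> 0"
  unfolding rho_def using s_pos by simp

lemma rho_le_1: "rho x y \<le> 1"
  unfolding rho_def using s_pos s_less_1 by (simp add: power_le_one)

lemma rho_pos: "x \<noteq> y \<Longrightarrow> rho x y > 0"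
  unfolding rho_def using s_pos by simp

lemma rho_sym: "rho x y = rho y x"
  unfolding rho_def sep_time_def by (simp add: commute eq_commute)

lemma rho_le:
  assumes "x \<in> M" "y \<in> M" "orbit_close m x y" shows "rho x y \<le> s^(2*m)"
  using sep_time_ge[OF assms(1,2) _ assms(3)] s_pos s_less_1
  by (cases "x = y") (simp_all add: rho_def power_decreasing)

lemma rho_orbit_close:
  assumes "x \<in> M" "y \<in> M" "rho x y \<le> s^(2*m)" shows "orbit_close m x y"
proof (cases "x = y")
  case True then show ?thesis using c_pos F_in assms by (simp add: orbit_close_def)
next
  case False
  then have "s^(2 * sep_time x y) \<le> s^(2*m)" using assms by (simp add: rho_def)
  then have "m \<le> sep_time x y" using s_pos s_less_1 by (simp add: power_decreasing_iff)
  then show ?thesis using orbit_close_sep_time orbit_close_mono by blast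
qed

text \<open>The four-point inequality: if three consecutive rho-distances are at most s^(2m), the
  points are pairwise m-orbit-close, hence the endpoints are (m - 2 M0)-orbit-close, and
  s^(-4 M0) \<le> 2 by the choice of s.\<close>
lemma rho_four_point:
  assumes M: "x \<in> M" "y \<in> M" "z \<in> M" "w \<in> M"
  shows "rho x w \<le> 2 * max (rho x y) (max (rho y z) (rho z w))"
proof -
  define r where "r = max (rho x y) (max (rho y z) (rho z w))"
  have bounds: "rho x y \<le> r" "rho y z \<le> r" "rho z w \<le> r" by (simp_all add: r_def)
  show ?thesis
  proof (cases "r = 0")
    case True
    then have "rho x y = 0" "rho y z = 0" "rho z w = 0"
      using bounds rho_nonneg by (meson order_antisym)+
    then have "x = y" "y = z" "z = w" using rho_pos by (metis less_irrefl)+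
    then show ?thesis by (simp add: rho_def)
  next
    case False
    have "r = rho x y \<or> r = rho y z \<or> r = rho z w" unfolding r_def max_def by auto
    then obtain m where m: "r = s^(2*m)" using False unfolding rho_def by (auto split: if_splits)
    then have "orbit_close m x y" "orbit_close m y z" "orbit_close m z w"
      using rho_orbit_close M bounds by simp_all
    then have "orbit_close (m - M0) x z" "orbit_close (m - M0) z w"
      using orbit_close_trans[OF M(1-3)] orbit_close_mono by auto
    then have "orbit_close (m - M0 - M0) x w" using orbit_close_trans[OF M(1,3,4)] by blast
    then have "rho x w \<le> s^(2*(m - M0 - M0))" using rho_le M by blast
    also have "\<dots> \<le> 2 * s^(2*m)"
    proof (cases "m \<ge> 2*M0")
      case True
      then have "s^(2*m) = s^(2*(m - M0 - M0)) * s^(4*M0)"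
        by (simp flip: power_add add: algebra_simps)
      moreover have "s^(2*(m - M0 - M0)) * 1 \<le> s^(2*(m - M0 - M0)) * (2 * s^(4*M0))"
        using s_power s_pos by (intro mult_left_mono) auto
      ultimately show ?thesis by (simp add: algebra_simps)
    next
      case False
      then have "s^(4*M0) \<le> s^(2*m)" using s_pos s_less_1 by (intro power_decreasing) auto
      then show ?thesis using False s_power by simp
    qed
    finally show ?thesis using m r_def by simp
  qed
qed

end

sublocale adapted_setup \<subseteq> R: four_point_quasimetric M rho
proof
  show "rho x x = 0" for x by (simp add: rho_def)
qed (fact rho_nonneg rho_sym rho_pos rho_four_point)+

context adapted_setup
begin

definition weighted :: "int \<Rightarrow> 'a \<Rightarrow> 'a \<Rightarrow> real" where
  "weighted n x y = s^(nat \<bar>n\<bar>) * R.D (F n x) (F n y)"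

definition adapted :: "'a \<Rightarrow> 'a \<Rightarrow> real" where
  "adapted x y = (if x \<in> M \<and> y \<in> M then (SUP n. weighted n x y) else 0)"

lemma D_le_1: "x \<in> M \<Longrightarrow> y \<in> M \<Longrightarrow> R.D x y \<le> 1"
  using R.D_le_rho rho_le_1 order_trans by blast

lemma weighted_nonneg: "x \<in> M \<Longrightarrow> y \<in> M \<Longrightarrow> 0 \<le> weighted n x y"
  using s_pos R.D_nonneg F_in by (simp add: weighted_def)

lemma weighted_le_1: "x \<in> M \<Longrightarrow> y \<in> M \<Longrightarrow> weighted n x y \<le> 1"
  using s_pos s_less_1 D_le_1 R.D_nonneg F_in
  by (simp add: weighted_def mult_le_one power_le_one)

lemma weighted_le_adapted: "x \<in> M \<Longrightarrow> y \<in> M \<Longrightarrow> weighted n x y \<le> adapted x y"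
  unfolding adapted_def using weighted_le_1 by (auto intro!: cSUP_upper bdd_aboveI[of _ 1])

lemma adapted_le: "x \<in> M \<Longrightarrow> y \<in> M \<Longrightarrow> (\<And>n. weighted n x y \<le> t) \<Longrightarrow> adapted x y \<le> t"
  unfolding adapted_def by (simp add: cSUP_least)

lemma D_le_adapted: "x \<in> M \<Longrightarrow> y \<in> M \<Longrightarrow> R.D x y \<le> adapted x y"
  using weighted_le_adapted[of x y 0] by (simp add: weighted_def)

lemma adapted_le_1: "adapted x y \<le> 1"
  using adapted_le weighted_le_1 by (cases "x \<in> M \<and> y \<in> M") (auto simp: adapted_def)

lemma adapted_metric: "Metric_space M adapted"
proof
  fix x y
  show "0 \<le> adapted x y"
  proof (cases "x \<in> M \<and> y \<in> M")
    case True then show ?thesis using D_le_adapted R.D_nonneg order_trans by blast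
  qed (auto simp: adapted_def)
  show "adapted x y = adapted y x" unfolding adapted_def weighted_def using R.D_sym F_in by auto
next
  fix x y assume xy: "x \<in> M" "y \<in> M"
  show "adapted x y = 0 \<longleftrightarrow> x = y"
  proof
    assume "adapted x y = 0"
    then have "rho x y \<le> 0" using D_le_adapted R.rho_le_D xy by fastforce
    then show "x = y" using rho_pos by (meson not_le)
  next
    assume "x = y"
    then have "adapted x y \<le> 0" using xy by (intro adapted_le) (simp_all add: weighted_def R.D_refl F_in)
    then show "adapted x y = 0" using weighted_nonneg weighted_le_adapted xy by (meson order_antisym order_trans)
  qed
next
  fix x y z assume xyz: "x \<in> M" "y \<in> M" "z \<in> M"
  show "adapted x z \<le> adapted x y + adapted y z"
  proof (rule adapted_le[OF xyz(1,3)])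
    fix n
    have "weighted n x z \<le> weighted n x y + weighted n y z"
      unfolding weighted_def distrib_left[symmetric]
      using R.D_triangle F_in xyz s_pos by (simp add: mult_left_mono)
    then show "weighted n x z \<le> adapted x y + adapted y z"
      using weighted_le_adapted[OF xyz(1,2), of n] weighted_le_adapted[OF xyz(2,3), of n] by linarith
  qed
qed

text \<open>Shifting time by j changes the weights by at most s^|j|, so every iterate F j is Lipschitz
  with constant s^-|j|; in particular f and f\<inverse> are (1/s)-Lipschitz.\<close>
lemma adapted_shift:
  assumes "x \<in> M" "y \<in> M"
  shows "adapted (F j x) (F j y) \<le> adapted x y / s^(nat \<bar>j\<bar>)"
proof (rule adapted_le)
  fix n
  have "nat \<bar>n+j\<bar> \<le> nat \<bar>n\<bar> + nat \<bar>j\<bar>" by linarith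
  then have "s^(nat \<bar>n\<bar>) * s^(nat \<bar>j\<bar>) \<le> s^(nat \<bar>n+j\<bar>)"
    using s_pos s_less_1 by (simp flip: power_add add: power_decreasing)
  then have "weighted n (F j x) (F j y) * s^(nat \<bar>j\<bar>) \<le> weighted (n+j) x y"
    using R.D_nonneg[OF F_in F_in] assms unfolding weighted_def
    by (simp add: F_add mult_right_mono mult.commute mult.left_commute flip: mult.assoc)
  also have "\<dots> \<le> adapted x y" by (rule weighted_le_adapted[OF assms])
  finally show "weighted n (F j x) (F j y) \<le> adapted x y / s^(nat \<bar>j\<bar>)"
    using s_pos by (simp add: pos_le_divide_eq)
qed (use assms F_in in auto)

lemma bilip_f: "bilip_homeo M adapted f"
  unfolding bilip_homeo_def lipschitz_on_metric_def
  using bij adapted_shift[of _ _ 1] adapted_shift[of _ _ "-1"]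
  by (auto simp: iter_int_1 iter_int_minus_1 intro!: exI[of _ "1/s"])

lemma adapted_le_sep_time:
  assumes "x \<in> M" "y \<in> M" "x \<noteq> y" shows "adapted x y \<le> s^(sep_time x y)"
proof (rule adapted_le[OF assms(1,2)])
  fix n
  define N where "N = sep_time x y"
  have "orbit_close (N - nat \<bar>n\<bar>) (F n x) (F n y)"
    using orbit_close_shift orbit_close_sep_time assms N_def by blast
  then have "R.D (F n x) (F n y) \<le> s^(2*(N - nat \<bar>n\<bar>))"
    using R.D_le_rho rho_le F_in assms order_trans by meson
  then have "weighted n x y \<le> s^(nat \<bar>n\<bar>) * s^(2*(N - nat \<bar>n\<bar>))"
    using s_pos by (simp add: weighted_def mult_left_mono)
  also have "\<dots> \<le> s^N"
    using power_decreasing[of N "nat \<bar>n\<bar> + 2*(N - nat \<bar>n\<bar>)" s] s_pos s_less_1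
    by (simp add: power_add)
  finally show "weighted n x y \<le> s^(sep_time x y)" by (simp add: N_def)
qed

text \<open>Points d0-close to a are orbit-close to a for any prescribed time, by continuity of the
  finitely many iterates involved.\<close>
lemma orbit_close_nbhd:
  assumes a: "a \<in> M" shows "\<exists>\<delta>>0. \<forall>x\<in>M. d0 a x < \<delta> \<longrightarrow> orbit_close P a x"
proof (induction P)
  case 0 then show ?case by (auto simp: orbit_close_def intro: exI[of _ 1])
next
  case (Suc P)
  have continuity: "\<exists>\<delta>>0. \<forall>x\<in>M. d0 a x < \<delta> \<longrightarrow> d0 (F k a) (F k x) < c/2" for k
    using F_continuous[of k] a c_pos unfolding metric_continuous_map[OF Metric_space_axioms]
    by (metis half_gt_zero)
  obtain \<delta>1 where d1: "\<delta>1 > 0" "\<forall>x\<in>M. d0 a x < \<delta>1 \<longrightarrow> orbit_close P a x" using Suc by blast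
  obtain \<delta>2 where d2: "\<delta>2 > 0" "\<forall>x\<in>M. d0 a x < \<delta>2 \<longrightarrow> d0 (F (int P) a) (F (int P) x) < c/2"
    using continuity by blast
  obtain \<delta>3 where d3: "\<delta>3 > 0" "\<forall>x\<in>M. d0 a x < \<delta>3 \<longrightarrow> d0 (F (- int P) a) (F (- int P) x) < c/2"
    using continuity by blast
  show ?case
  proof (intro exI[of _ "min \<delta>1 (min \<delta>2 \<delta>3)"] conjI ballI impI)
    fix x assume x: "x \<in> M" "d0 a x < min \<delta>1 (min \<delta>2 \<delta>3)"
    show "orbit_close (Suc P) a x" unfolding orbit_close_def
    proof (intro allI impI)
      fix k :: int assume "\<bar>k\<bar> < int (Suc P)"
      then consider "\<bar>k\<bar> < int P" | "k = int P" | "k = - int P" by linarith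
      then show "d0 (F k a) (F k x) \<le> c/2"
        by cases (use d1 d2 d3 x in \<open>auto simp: orbit_close_def\<close>)
    qed
  qed (use d1 d2 d3 in auto)
qed

text \<open>The adapted metric defines the original topology: the identity is continuous from d0 to the
  adapted metric, hence a homeomorphism by compactness.\<close>
lemma adapted_topology: "Metric_space.mtopology M adapted = mtopology"
proof -
  interpret A: Metric_space M adapted by (rule adapted_metric)
  have "continuous_map mtopology A.mtopology id"
    unfolding metric_continuous_map[OF adapted_metric]
  proof (intro conjI ballI allI impI)
    fix a e assume a: "a \<in> M" and e: "(e::real) > 0"
    obtain P where P: "s^P < e" using real_arch_pow_inv[OF e s_less_1] by blast
    obtain \<delta> where d: "\<delta> > 0" "\<forall>x\<in>M. d0 a x < \<delta> \<longrightarrow> orbit_close P a x"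
      using orbit_close_nbhd[OF a] by blast
    have "adapted a x < e" if x: "x \<in> M" "d0 a x < \<delta>" for x
    proof (cases "a = x")
      case False
      then have "P \<le> sep_time a x" using sep_time_ge a x d by blast
      then have "s^(sep_time a x) \<le> s^P" using s_pos s_less_1 by simp
      then show ?thesis using adapted_le_sep_time[OF a x(1) False] P by simp
    qed (use e A.zero x in simp)
    then show "\<exists>\<delta>>0. \<forall>x. x \<in> M \<and> d0 a x < \<delta> \<longrightarrow> adapted (id a) (id x) < e" using d by auto
  qed auto
  then have "homeomorphic_map mtopology A.mtopology id"
    by (intro continuous_imp_homeomorphic_map) (auto simp: compact A.Hausdorff_space_mtopology)
  then show ?thesis using homeomorphic_map_id by blast
qed

lemma weighted_le_neighbour:
  assumes xy: "x \<in> M" "y \<in> M" and n: "n \<noteq> 0"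
  shows "weighted n x y \<le> s * max (adapted (f x) (f y)) (adapted (inv_into M f x) (inv_into M f y))"
proof -
  obtain j where j: "j = 1 \<or> j = -1" "nat \<bar>n\<bar> = Suc (nat \<bar>n - j\<bar>)"
  proof (cases "n > 0")
    case True then show ?thesis using that[of 1] by simp
  next
    case False then show ?thesis using that[of "-1"] n by simp
  qed
  have "weighted n x y = s * weighted (n - j) (F j x) (F j y)"
    using j xy by (simp add: weighted_def F_add)
  also have "\<dots> \<le> s * adapted (F j x) (F j y)"
    using weighted_le_adapted F_in xy s_pos by (simp add: mult_left_mono)
  also have "\<dots> \<le> s * max (adapted (f x) (f y)) (adapted (inv_into M f x) (inv_into M f y))"
    using j s_pos by (auto simp: iter_int_1 iter_int_minus_1 intro: mult_left_mono)
  finally show ?thesis .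
qed

text \<open>If the orbits of x and y separate late (s^N \<le> 1/2 for the separation time N), the time-0
  term is dominated by the term at the separation time, where D is at least 1/2.\<close>
lemma weighted_0_le_separation:
  assumes xy: "x \<in> M" "y \<in> M" "x \<noteq> y" and late: "s^(sep_time x y) \<le> 1/2"
  shows "\<exists>e. e \<noteq> 0 \<and> weighted 0 x y \<le> weighted e x y"
proof -
  define N where "N = sep_time x y"
  obtain e where e: "\<bar>e\<bar> = int N" "d0 (F e x) (F e y) > c/2"
    using sep_time_attained[OF xy] N_def by blast
  have "N \<noteq> 0" using late unfolding N_def by (intro notI) simp
  have eM: "F e x \<in> M" "F e y \<in> M" using F_in xy by auto
  have "sep_time (F e x) (F e y) = 0"
    unfolding sep_time_def by (rule Least_eq_0) (use e eM F_add in \<open>auto intro!: exI[of _ 0]\<close>)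
  moreover have "F e x \<noteq> F e y" using e c_pos eM by auto
  ultimately have "rho (F e x) (F e y) = 1" by (simp add: rho_def)
  then have De: "1/2 \<le> R.D (F e x) (F e y)" using R.rho_le_D[OF eM] by simp
  have "weighted 0 x y \<le> s^N * s^N" using R.D_le_rho[OF xy(1,2)] xy(3)
    by (simp add: weighted_def rho_def N_def flip: power_add mult_2)
  also have "\<dots> \<le> s^N * (1/2)" using late s_pos by (intro mult_left_mono) (auto simp: N_def)
  also have "\<dots> \<le> weighted e x y"
    using De s_pos e by (simp add: weighted_def mult_left_mono)
  finally have "weighted 0 x y \<le> weighted e x y" .
  moreover have "e \<noteq> 0" using e \<open>N \<noteq> 0\<close> by auto
  ultimately show ?thesis by blast
qed

lemma f_locally_expanding: "\<exists>\<delta>>0. locally_expanding M adapted f (1/s) \<delta>"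
proof -
  obtain N1 where N1: "s^N1 < 1/2" using real_arch_pow_inv[of "1/2" s] s_less_1 by auto
  define \<delta> where "\<delta> = s^(2*N1)/2"
  have "(1/s) * adapted x y \<le> max (adapted (f x) (f y)) (adapted (inv_into M f x) (inv_into M f y))"
    if xy: "x \<in> M" "y \<in> M" "x \<noteq> y" and small: "adapted x y \<le> \<delta>" for x y
  proof -
    have "s^(2 * sep_time x y) / 2 \<le> adapted x y"
      using R.rho_le_D[OF xy(1,2)] D_le_adapted[OF xy(1,2)] xy(3) by (simp add: rho_def)
    then have "s^(2 * sep_time x y) \<le> s^(2*N1)" using small by (simp add: \<delta>_def)
    then have "s^(sep_time x y) \<le> s^N1" using s_pos s_less_1 by (simp add: power_decreasing_iff)
    then obtain e where e: "e \<noteq> 0" "weighted 0 x y \<le> weighted e x y"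
      using weighted_0_le_separation[OF xy] N1 by (meson less_imp_le order_trans)
    have "adapted x y \<le> s * max (adapted (f x) (f y)) (adapted (inv_into M f x) (inv_into M f y))"
    proof (rule adapted_le[OF xy(1,2)])
      fix n
      show "weighted n x y \<le> s * max (adapted (f x) (f y)) (adapted (inv_into M f x) (inv_into M f y))"
        using weighted_le_neighbour[OF xy(1,2)] e by (cases "n = 0") (auto intro: order_trans)
    qed
    then show ?thesis using s_pos by (simp add: field_simps)
  qed
  moreover have "\<delta> > 0" using s_pos by (simp add: \<delta>_def)
  ultimately show ?thesis unfolding locally_expanding_def by blast
qed

lemma robustly_expansive_adapted:
  "\<exists>\<epsilon>>0. \<exists>\<delta>>0. \<forall>g. bilip_homeo M adapted g \<and> dW M adapted f g < \<epsilon> \<longrightarrow> expansive_const M adapted g \<delta>"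
proof -
  obtain \<delta> where "\<delta> > 0" and f_exp: "locally_expanding M adapted f (1/s) \<delta>"
    using f_locally_expanding by blast
  moreover have "1/s > 1" and "(1/s - 1)/2 > 0" using s_pos s_less_1 by (simp_all add: field_simps)
  ultimately show ?thesis
    using robustly_expansive[OF adapted_metric _ bilip_f f_exp] adapted_le_1 by blast
qed

end

text \<open>A rate s < 1 with s^(4 M0) \<ge> 1/2 exists by Bernoulli's inequality.\<close>
lemma rate_exists: "\<exists>s::real. 0 < s \<and> s < 1 \<and> s^(4*M0) \<ge> 1/2"
proof -
  define s :: real where "s = 1 + (- 1/(8*M0+2))"
  have "1 + real (4*M0) * (- 1/(8*M0+2)) \<le> s^(4*M0)"
    unfolding s_def by (rule Bernoulli_inequality) (simp add: field_simps)
  moreover have "1/2 \<le> 1 + real (4*M0) * (- 1/(8*M0+2))" by (simp add: field_simps)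
  moreover have "0 < s" "s < 1" by (auto simp: s_def field_simps)
  ultimately show ?thesis by (intro exI[of _ s]) linarith
qed

lemma (in expansive_system) adapted_setup_exists: "\<exists>M0 s. adapted_setup M d0 f c M0 s"
proof -
  obtain M0 where "\<forall>x\<in>M. \<forall>y\<in>M. (\<forall>k::int. \<bar>k\<bar> \<le> int M0 \<longrightarrow> d0 (F k x) (F k y) \<le> c) \<longrightarrow> d0 x y \<le> c/2"
    using uniform_expansivity[of "c/2"] c_pos by auto
  moreover obtain s :: real where "0 < s" "s < 1" "s^(4*M0) \<ge> 1/2" using rate_exists by blast
  ultimately show ?thesis by (intro exI) (unfold_locales, auto)
qed

lemma expansive_homeo_system:
  assumes "compact_space X" and "expansive_homeo X f"
  obtains d0 c where "expansive_system (topspace X) d0 f c"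
    and "Metric_space.mtopology (topspace X) d0 = X"
proof -
  let ?M = "topspace X"
  have hm: "homeomorphic_map X X f" using assms(2) by (simp add: expansive_homeo_def)
  obtain d0 c where ms: "Metric_space ?M d0" and top: "Metric_space.mtopology ?M d0 = X"
    and exp: "expansive_const ?M d0 f c"
    using assms(2) unfolding expansive_homeo_def by blast
  have bij: "bij_betw f ?M ?M"
    using homeomorphic_imp_surjective_map[OF hm] homeomorphic_imp_injective_map[OF hm]
    by (simp add: bij_betw_def)
  obtain g where g: "homeomorphic_maps X X f g" using hm homeomorphic_map_maps by blast
  have "continuous_map X X (inv_into ?M f)"
  proof (rule continuous_map_eq)
    show "continuous_map X X g" using g by (simp add: homeomorphic_maps_def)
    fix y assume "y \<in> topspace X"
    then have "f (g y) = y" "g y \<in> ?M" using g by (auto simp: homeomorphic_maps_def continuous_map_def)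
    then show "g y = inv_into ?M f y" using bij by (metis bij_betw_def inv_into_f_f)
  qed
  then have "expansive_system ?M d0 f c"
    using ms bij homeomorphic_imp_continuous_map[OF hm] assms(1) exp top
    by (simp add: expansive_system_def expansive_system_axioms_def)
  then show thesis using that top by blast
qed

theorem mainTheorem2:
  fixes X :: "'a topology" and f :: "'a \<Rightarrow> 'a"
  assumes "compact_space X" and "metrizable_space X" and "expansive_homeo X f"
  shows "\<exists>d. Metric_space (topspace X) d \<and> Metric_space.mtopology (topspace X) d = X \<and>
             bilip_homeo (topspace X) d f \<and>
             (\<exists>\<epsilon>>0. \<exists>\<delta>>0. \<forall>g. bilip_homeo (topspace X) d g \<and> dW (topspace X) d f g < \<epsilon>
                 \<longrightarrow> expansive_const (topspace X) d g \<delta>)"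
proof -
  obtain d0 c where sys: "expansive_system (topspace X) d0 f c"
    and top: "Metric_space.mtopology (topspace X) d0 = X"
    using expansive_homeo_system[OF assms(1,3)] .
  obtain M0 s where "adapted_setup (topspace X) d0 f c M0 s"
    using expansive_system.adapted_setup_exists[OF sys] by blast
  then interpret adapted_setup "topspace X" d0 f c M0 s .
  show ?thesis
    using adapted_metric adapted_topology top bilip_f robustly_expansive_adapted by auto
qed

end
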